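(* Let $d\ge1$ and $\alpha\in(1/2,1)$. Then there exist two absolutely continuous probability measures $\mu_1,\mu_2$ on $\mathbb R^d$ such that there is no convex set $C\subset\mathbb R^d$ with $\mu_1(C)=\mu_2(C)=\alpha$. *)

theory Defs
  imports "HOL-Probability.Probability"
begin

end

theory Submission
  imports Defs
begin

(* Take mu1 uniform on the unit ball B(0,1).  By central symmetry every closed half-space
   through the origin has mu1-mass exactly 1/2 < alpha, and a compactness argument over the unit
   sphere of normal directions yields a margin r > 0 such that every half-space
   {x. u . x <= r} with |u| = 1 still has mu1-mass < alpha.  A convex set C with
   mu1(C) >= alpha must then contain the ball B(0,r): a point p of B(0,r) outside C could be
   separated from C by a half-space {x. u . x <= u . p}, which lies inside {x. u . x <= r}.
   Taking mu2 uniform on B(0,r), every such C has mu2(C) = 1 > alpha. *)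

definition uniform_ball :: "real \<Rightarrow> 'a::euclidean_space measure" where
  "uniform_ball r = uniform_measure lborel (cball 0 r)"

lemma halfspace_borel [measurable]: "{x::'a::euclidean_space. u \<bullet> x \<le> c} \<in> sets borel"
  by (simp add: borel_closed closed_halfspace_le)

lemma measure_lborel_cball_pos:
  assumes "0 < r"
  shows "emeasure lborel (cball (0::'a::euclidean_space) r) \<noteq> 0"
    and "emeasure lborel (cball (0::'a) r) \<noteq> \<infinity>"
    and "0 < measure lborel (cball (0::'a) r)"
proof -
  show fin: "emeasure lborel (cball (0::'a) r) \<noteq> \<infinity>"
    using emeasure_lborel_cball_finite[of "0::'a" r] by auto
  show pos: "0 < measure lborel (cball (0::'a) r)"
    using content_cball_pos[OF assms, of 0] by simp
  show "emeasure lborel (cball (0::'a) r) \<noteq> 0"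
    using pos fin by (simp add: emeasure_eq_ennreal_measure)
qed

lemma sets_uniform_ball [simp]: "sets (uniform_ball r :: 'a::euclidean_space measure) = sets borel"
  by (simp add: uniform_ball_def)

lemma prob_space_uniform_ball: "0 < r \<Longrightarrow> prob_space (uniform_ball r :: 'a::euclidean_space measure)"
  unfolding uniform_ball_def by (intro prob_space_uniform_measure measure_lborel_cball_pos)

lemma absolutely_continuous_uniform_measure:
  "A \<in> sets borel \<Longrightarrow> absolutely_continuous lborel (uniform_measure lborel A)"
  unfolding uniform_measure_def by (rule absolutely_continuousI_density) simp

lemma absolutely_continuous_uniform_ball:
  "absolutely_continuous lborel (uniform_ball r :: 'a::euclidean_space measure)"
  unfolding uniform_ball_def by (rule absolutely_continuous_uniform_measure) (simp add: borel_closed)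

lemma measure_uniform_ball_cball:
  "0 < r \<Longrightarrow> measure (uniform_ball r) (cball (0::'a::euclidean_space) r) = 1"
  using emeasure_uniform_measure_1[OF measure_lborel_cball_pos(1,2)]
  by (simp add: uniform_ball_def measure_def)

lemma measure_lborel_reflect:
  fixes S :: "'a::euclidean_space set"
  assumes "S \<in> sets borel"
  shows "measure lborel (uminus -` S) = measure lborel S"
proof -
  have reflect: "distr lborel borel (\<lambda>x::'a. - x) = lborel"
    using lborel_affine[of "-1::real" "0::'a"] by (simp add: density_1)
  have "measure lborel S = measure (distr lborel borel (\<lambda>x::'a. - x)) S"
    by (simp add: reflect)
  also have "\<dots> = measure lborel (uminus -` S)"
    using assms by (subst measure_distr) auto
  finally show ?thesis by simp
qed

lemma measure_half_ball:
  fixes u :: "'a::euclidean_space"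
  assumes "u \<noteq> 0"
  shows "measure lborel (cball 0 r \<inter> {x. u \<bullet> x \<le> 0}) = measure lborel (cball (0::'a) r) / 2"
proof -
  let ?B = "cball (0::'a) r"
  let ?H = "?B \<inter> {x. u \<bullet> x \<le> 0}" and ?H' = "?B \<inter> {x. 0 \<le> u \<bullet> x}"
  have "uminus -` ?H = ?H'" by auto
  then have symm: "measure lborel ?H' = measure lborel ?H"
    using measure_lborel_reflect[of ?H] by simp
  have "emeasure lborel ?H \<le> emeasure lborel ?B" "emeasure lborel ?H' \<le> emeasure lborel ?B"
    by (auto intro!: emeasure_mono)
  then have fm: "?H \<in> fmeasurable lborel" "?H' \<in> fmeasurable lborel"
    using emeasure_lborel_cball_finite[of "0::'a" r]
    by (auto simp: fmeasurable_def borel_closed closed_halfspace_ge)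
  have "negligible (?H \<inter> ?H')"
    by (rule negligible_subset[OF negligible_hyperplane[of u 0]]) (use assms in auto)
  then have "measure lebesgue (?H \<inter> ?H') = 0"
    by (rule negligible_imp_measure0)
  moreover have "?H \<inter> ?H' \<in> sets lborel" using fm by auto
  ultimately have null: "measure lborel (?H \<inter> ?H') = 0" by simp
  have "?H \<union> ?H' = ?B" by auto
  then have "measure lborel ?B = measure lborel ?H + measure lborel ?H' - measure lborel (?H \<inter> ?H')"
    using measure_Un3[OF fm] by simp
  then show ?thesis using symm null by simp
qed

lemma uniform_ball_halfspace:
  fixes u :: "'a::euclidean_space"
  assumes "0 < r" "u \<noteq> 0"
  shows "measure (uniform_ball r) {x. u \<bullet> x \<le> 0} = 1/2"
proof -
  have "measure (uniform_ball r) {x. u \<bullet> x \<le> 0}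
        = measure lborel (cball 0 r \<inter> {x. u \<bullet> x \<le> 0}) / measure lborel (cball (0::'a) r)"
    unfolding uniform_ball_def
    by (subst measure_uniform_measure) (use measure_lborel_cball_pos[OF assms(1)] in auto)
  then show ?thesis
    using measure_half_ball[OF assms(2)] measure_lborel_cball_pos(3)[OF assms(1), where 'a='a]
    by simp
qed

lemma (in finite_measure) measure_limsup_ge:
  assumes sets: "range A \<subseteq> sets M" and bound: "\<And>n. \<beta> \<le> measure M (A n)"
  shows "\<beta> \<le> measure M (limsup A)"
proof -
  define D where "D N = (\<Union>n\<in>{N..}. A n)" for N
  have D_sets: "range D \<subseteq> sets M" using sets by (auto simp: D_def)
  have "decseq D" by (auto simp: D_def decseq_def) (meson atLeast_iff order_trans)
  then have "(\<lambda>N. measure M (D N)) \<longlonglongrightarrow> measure M (\<Inter>N. D N)"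
    using D_sets by (rule finite_Lim_measure_decseq[rotated])
  moreover have "\<beta> \<le> measure M (D N)" for N
  proof -
    have "A N \<subseteq> D N" by (auto simp: D_def)
    then show ?thesis
      using bound[of N] finite_measure_mono[of "A N" "D N"] D_sets by fastforce
  qed
  ultimately have "\<beta> \<le> measure M (\<Inter>N. D N)"
    by (intro LIMSEQ_le_const) auto
  then show ?thesis by (simp add: limsup_INF_SUP D_def)
qed

lemma limsup_halfspaces_subset:
  fixes U :: "nat \<Rightarrow> 'a::real_inner"
  assumes "U \<longlonglongrightarrow> l" "t \<longlonglongrightarrow> c"
  shows "limsup (\<lambda>n. {x. U n \<bullet> x \<le> t n}) \<subseteq> {x. l \<bullet> x \<le> c}"
proof
  fix x assume x: "x \<in> limsup (\<lambda>n. {x. U n \<bullet> x \<le> t n})"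
  show "x \<in> {x. l \<bullet> x \<le> c}"
  proof (rule ccontr)
    assume "x \<notin> {x. l \<bullet> x \<le> c}"
    moreover have "(\<lambda>n. U n \<bullet> x - t n) \<longlonglongrightarrow> l \<bullet> x - c"
      using assms by (intro tendsto_diff tendsto_inner tendsto_const)
    ultimately have "eventually (\<lambda>n. 0 < U n \<bullet> x - t n) sequentially"
      by (intro order_tendstoD) auto
    then obtain N where "\<And>n. n \<ge> N \<Longrightarrow> t n < U n \<bullet> x"
      by (auto simp: eventually_sequentially)
    moreover obtain n where "n \<ge> N" "U n \<bullet> x \<le> t n"
      using x by (auto simp: limsup_INF_SUP)
    ultimately show False by (meson not_less)
  qed
qed

lemma halfspace_margin:
  fixes M :: "'a::euclidean_space measure"
  assumes "prob_space M" "sets M = sets borel"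
    and half: "\<And>u. norm u = 1 \<Longrightarrow> measure M {x. u \<bullet> x \<le> 0} < \<alpha>"
  shows "\<exists>r>0. \<forall>u. norm u = 1 \<longrightarrow> measure M {x. u \<bullet> x \<le> r} < \<alpha>"
proof (rule ccontr)
  interpret prob_space M by fact
  assume "\<not> ?thesis"
  then have "\<forall>n::nat. \<exists>u. norm u = 1 \<and> \<alpha> \<le> measure M {x. u \<bullet> x \<le> 1 / Suc n}"
    by (metis not_less of_nat_0_less_iff zero_less_Suc zero_less_divide_1_iff)
  then obtain U :: "nat \<Rightarrow> 'a" where U: "\<And>n. norm (U n) = 1"
      "\<And>n. \<alpha> \<le> measure M {x. U n \<bullet> x \<le> 1 / Suc n}" by metis
  have "U n \<in> sphere 0 1" for n using U(1) by simp
  then obtain l \<phi> where l: "l \<in> sphere 0 1" "strict_mono \<phi>" "(U \<circ> \<phi>) \<longlonglongrightarrow> l"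
    using compact_imp_seq_compact[OF compact_sphere] unfolding seq_compact_def by metis
  have "(\<lambda>n. 1 / real (Suc n)) \<longlonglongrightarrow> 0"
    using LIMSEQ_Suc[OF lim_inverse_n'] by simp
  then have t: "(\<lambda>n. 1 / real (Suc (\<phi> n))) \<longlonglongrightarrow> 0"
    using LIMSEQ_subseq_LIMSEQ[OF _ l(2)] by (simp add: o_def)
  let ?A = "\<lambda>n. {x. (U \<circ> \<phi>) n \<bullet> x \<le> 1 / real (Suc (\<phi> n))}"
  have "\<alpha> \<le> measure M (limsup ?A)"
    using U(2) assms(2) by (intro measure_limsup_ge) auto
  also have "\<dots> \<le> measure M {x. l \<bullet> x \<le> 0}"
    using limsup_halfspaces_subset[OF l(3) t] assms(2) by (intro finite_measure_mono) auto
  also have "\<dots> < \<alpha>" using half l(1) by simp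
  finally show False by simp
qed

lemma convex_subset_halfspace:
  fixes C :: "'a::euclidean_space set"
  assumes "convex C" "p \<notin> C"
  shows "\<exists>u. norm u = 1 \<and> C \<subseteq> {x. u \<bullet> x \<le> u \<bullet> p}"
proof -
  have "convex ((\<lambda>x. x - p) ` C)"
    using assms(1) by (rule convex_translation_subtract)
  moreover have "0 \<notin> (\<lambda>x. x - p) ` C" using assms(2) by auto
  ultimately obtain a where a: "a \<noteq> 0" "\<forall>y \<in> (\<lambda>x. x - p) ` C. 0 \<le> a \<bullet> y"
    using separating_hyperplane_set_0 by blast
  define u where "u = - (a /\<^sub>R norm a)"
  have "norm u = 1" using a(1) by (simp add: u_def)
  moreover have "u \<bullet> x \<le> u \<bullet> p" if "x \<in> C" for x
  proof -
    have "u \<bullet> (x - p) = - (a \<bullet> (x - p)) / norm a" by (simp add: u_def divide_inverse_commute)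
    also have "\<dots> \<le> 0" using a(2) that by (simp add: divide_nonneg_pos)
    finally show ?thesis by (simp add: inner_diff_right)
  qed
  ultimately show ?thesis by blast
qed

lemma heavy_convex_contains_ball:
  fixes M :: "'a::euclidean_space measure"
  assumes "prob_space M" "sets M = sets borel"
    and light: "\<And>u. norm u = 1 \<Longrightarrow> measure M {x. u \<bullet> x \<le> r} < \<alpha>"
    and C: "convex C" "C \<in> sets (completion M)" "\<alpha> \<le> measure (completion M) C"
  shows "cball 0 r \<subseteq> C"
proof
  fix p :: 'a assume p: "p \<in> cball 0 r"
  show "p \<in> C"
  proof (rule ccontr)
    assume "p \<notin> C"
    then obtain u where u: "norm u = 1" "C \<subseteq> {x. u \<bullet> x \<le> u \<bullet> p}"
      using convex_subset_halfspace[OF C(1)] by blast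
    have "norm p \<le> r" using p by simp
    then have "u \<bullet> p \<le> r" using norm_cauchy_schwarz[of u p] u(1) by simp
    then have sub: "C \<subseteq> {x. u \<bullet> x \<le> r}" using u(2) by auto
    have H: "{x. u \<bullet> x \<le> r} \<in> sets M" using assms(2) by simp
    interpret completion: prob_space "completion M"
      using assms(1) by (rule prob_space.prob_space_completion)
    have "measure (completion M) C \<le> measure (completion M) {x. u \<bullet> x \<le> r}"
      using H by (intro completion.finite_measure_mono[OF sub]) simp
    also have "\<dots> = measure M {x. u \<bullet> x \<le> r}"
      using H by simp
    finally show False using light[OF u(1)] C(3) by simp
  qed
qed

theorem mainTheorem7:
  fixes \<alpha> :: real
  assumes "1/2 < \<alpha>" and "\<alpha> < 1"
  shows "\<exists>\<mu>1 \<mu>2 :: (real ^ 'n) measure.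
           prob_space \<mu>1 \<and> sets \<mu>1 = sets lborel \<and> absolutely_continuous lborel \<mu>1 \<and>
           prob_space \<mu>2 \<and> sets \<mu>2 = sets lborel \<and> absolutely_continuous lborel \<mu>2 \<and>
           \<not> (\<exists>C :: (real ^ 'n) set. convex C \<and> C \<in> sets (completion \<mu>1) \<and> C \<in> sets (completion \<mu>2) \<and>
                 measure (completion \<mu>1) C = \<alpha> \<and> measure (completion \<mu>2) C = \<alpha>)"
proof -
  let ?\<mu>1 = "uniform_ball 1 :: (real ^ 'n) measure"
  have p1: "prob_space ?\<mu>1" by (simp add: prob_space_uniform_ball)
  have "measure ?\<mu>1 {x. u \<bullet> x \<le> 0} < \<alpha>" if "norm u = 1" for u
  proof -
    have "u \<noteq> 0" using that by auto
    then show ?thesis using uniform_ball_halfspace[of 1 u] assms(1) by simp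
  qed
  then obtain r where r: "0 < r" "\<And>u. norm u = 1 \<Longrightarrow> measure ?\<mu>1 {x. u \<bullet> x \<le> r} < \<alpha>"
    using halfspace_margin[OF p1 sets_uniform_ball] by blast
  let ?\<mu>2 = "uniform_ball r :: (real ^ 'n) measure"
  have p2: "prob_space ?\<mu>2" using r(1) by (rule prob_space_uniform_ball)
  interpret completion2: prob_space "completion ?\<mu>2"
    using p2 by (rule prob_space.prob_space_completion)
  have "\<not> (convex C \<and> C \<in> sets (completion ?\<mu>1) \<and> C \<in> sets (completion ?\<mu>2) \<and>
           measure (completion ?\<mu>1) C = \<alpha> \<and> measure (completion ?\<mu>2) C = \<alpha>)" for C
  proof
    assume C: "convex C \<and> C \<in> sets (completion ?\<mu>1) \<and> C \<in> sets (completion ?\<mu>2) \<and>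
           measure (completion ?\<mu>1) C = \<alpha> \<and> measure (completion ?\<mu>2) C = \<alpha>"
    then have "cball 0 r \<subseteq> C"
      using heavy_convex_contains_ball[OF p1 sets_uniform_ball r(2)] by auto
    have "1 = measure (completion ?\<mu>2) (cball 0 r)"
      using measure_uniform_ball_cball[OF r(1)] by (simp add: borel_closed)
    also have "\<dots> \<le> measure (completion ?\<mu>2) C"
      using \<open>cball 0 r \<subseteq> C\<close> C by (intro completion2.finite_measure_mono) auto
    finally show False using C assms(2) by simp
  qed
  then show ?thesis
    using p1 p2 absolutely_continuous_uniform_ball
    by (intro exI[of _ ?\<mu>1] exI[of _ ?\<mu>2]) auto
qed

end
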